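(* For every natural number $n\geq 2$, the $n$-Split Interval $S_n(I)$ contains no subspace homeomorphic to $D_n(2^{\mathbb{N}})$, and $D_n(2^{\mathbb{N}})$ contains no subspace homeomorphic to $S_n(I)$.
   Context: Let $I=[0,1]$. For $n\geq 2$, $S_n(I)$ is the set $I\times\{0,\ldots,n-1\}$ with the topology in which the points $(x,i)$ with $i\in\{2,\ldots,n-1\}$ are isolated, a point $(x,0)$ with $x>0$ has basic neighbourhoods $\{(x,0)\}\cup\{(y,i): z_0<y<x,\ i\in\{0,\ldots,n-1\}\}$ for $z_0\in I$, $z_0<x$, a point $(x,1)$ with $x<1$ has basic neighbourhoods $\{(x,1)\}\cup\{(y,i): x<y<z_1,\ i\in\{0,\ldots,n-1\}\}$ for $z_1\in I$, $z_1>x$, and the points $(0,0)$ and $(1,1)$ are isolated. For $n\geq 2$ and a Hausdorff space $X$, the Alexandroff $n$-plicate $D_n(X)$ is the set $X\times\{0,\ldots,n-1\}$ with the topology in which the points $(x,i)$ with $i\in\{1,\ldots,n-1\}$ are isolated and a point $(x,0)$ has basic neighbourhoods $\mathscr{U}\times\{0,\ldots,n-1\}\setminus\{(x,i):1\leq i\leq n-1\}$, where $\mathscr{U}$ ranges over neighbourhoods of $x$ in $X$. $2^{\mathbb{N}}$ is the Cantor space. *)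

theory Defs
  imports "HOL-Analysis.Analysis"
begin

definition split_interval :: "nat \<Rightarrow> (real \<times> nat) topology" where
  "split_interval n = topology_generated_by
     ({{(x, i)} | x i. 0 \<le> x \<and> x \<le> 1 \<and> 2 \<le> i \<and> i < n}
      \<union> {{(0, 0)}, {(1, 1)}}
      \<union> {insert (x, 0) {(y, i). z < y \<and> y < x \<and> i < n} | x z.
            0 < x \<and> x \<le> 1 \<and> 0 \<le> z \<and> z < x}
      \<union> {insert (x, 1) {(y, i). x < y \<and> y < z \<and> i < n} | x z.
            0 \<le> x \<and> x < 1 \<and> x < z \<and> z \<le> 1})"

definition alexandroff_nplicate :: "'a topology \<Rightarrow> nat \<Rightarrow> ('a \<times> nat) topology" where
  "alexandroff_nplicate X n = topology_generated_by
     ({{(x, i)} | x i. x \<in> topspace X \<and> 1 \<le> i \<and> i < n}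
      \<union> {U \<times> {0..<n} - {(x, i) | i. 1 \<le> i \<and> i < n} | U x.
            openin X U \<and> x \<in> U})"

definition cantor_space :: "(nat \<Rightarrow> bool) topology" where
  "cantor_space = product_topology (\<lambda>_. discrete_topology (UNIV :: bool set)) UNIV"

end

theory Submission
  imports Defs
begin

(*
  In S_n(I) the non-isolated points are the (x,0) with x > 0 and the (x,1) with x < 1; in
  D_n(2^N) they are the points of level 0; an embedding preserves non-isolatedness. Each
  non-isolated p of S_n(I) has a one-sided basic neighbourhood N(p), and for p, q of the same level,
  p in N(q) and q in N(p) force p = q. Pulling the N(p) back along the embedding to the level-0
  copy of 2^N yields uncountably many points (all of 2^N, resp. all of (0,1)) with open
  neighbourhoods in 2^N satisfying this antisymmetry. Choosing, inside each neighbourhood, a member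
  of a countable base of 2^N containing the point is then injective, which is impossible.
*)

lemma countable_if_antisymmetric_neighbourhoods:
  assumes "second_countable X"
    and nbhd: "\<And>i. i \<in> I \<Longrightarrow> openin X (U i) \<and> p i \<in> U i"
    and unique: "\<And>i j. \<lbrakk>i \<in> I; j \<in> I; p i \<in> U j; p j \<in> U i\<rbrakk> \<Longrightarrow> i = j"
  shows "countable I"
proof -
  obtain \<B> where "countable \<B>"
    and base: "\<And>W x. openin X W \<Longrightarrow> x \<in> W \<Longrightarrow> \<exists>V\<in>\<B>. x \<in> V \<and> V \<subseteq> W"
    using assms(1) by (auto simp: second_countable_def)
  have "\<forall>i\<in>I. \<exists>V. V \<in> \<B> \<and> p i \<in> V \<and> V \<subseteq> U i"
    using base nbhd by meson
  then obtain V where V: "\<And>i. i \<in> I \<Longrightarrow> V i \<in> \<B> \<and> p i \<in> V i \<and> V i \<subseteq> U i"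
    by (auto dest!: bchoice)
  have "inj_on V I"
  proof (rule inj_onI)
    fix i j assume ij: "i \<in> I" "j \<in> I" "V i = V j"
    then have "p i \<in> U j" "p j \<in> U i"
      using V by blast+
    then show "i = j"
      by (rule unique[OF ij(1,2)])
  qed
  moreover have "countable (V ` I)"
    using \<open>countable \<B>\<close> by (rule countable_subset[rotated]) (use V in blast)
  ultimately show ?thesis
    using countable_image_inj_on by blast
qed

lemma homeomorphic_map_subtopology_reflects_isolated:
  assumes g: "homeomorphic_map X (subtopology Y A) g" and "x \<in> topspace X" "openin Y {g x}"
  shows "openin X {x}"
proof -
  have "g x \<in> A"
    using homeomorphic_imp_surjective_map[OF g] assms(2) by auto
  then have "openin (subtopology Y A) {g x}"
    using openin_subtopology_Int[OF assms(3), of A] by (simp add: Int_absorb2)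
  then show ?thesis
    using homeomorphic_map_openness[OF g, of "{x}"] assms(2) by simp
qed

lemma homeomorphic_map_subtopology_open_trace:
  assumes g: "homeomorphic_map X (subtopology Y B) g" and "openin X V"
  shows "\<exists>W. openin Y W \<and> (\<forall>p\<in>topspace X. g p \<in> W \<longleftrightarrow> p \<in> V)"
proof -
  have "openin (subtopology Y B) (g ` V)"
    using homeomorphic_map_openness[OF g openin_subset] assms(2) by blast
  then obtain W where W: "openin Y W" "g ` V = W \<inter> B"
    by (auto simp: openin_subtopology)
  have "g p \<in> W \<longleftrightarrow> p \<in> V" if "p \<in> topspace X" for p
  proof -
    have "g p \<in> B"
      using homeomorphic_imp_surjective_map[OF g] that by auto
    then have "g p \<in> W \<longleftrightarrow> g p \<in> g ` V"
      using W(2) by blast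
    also have "\<dots> \<longleftrightarrow> p \<in> V"
      by (rule inj_on_image_mem_iff[OF homeomorphic_imp_injective_map[OF g] that openin_subset[OF assms(2)]])
    finally show ?thesis .
  qed
  with W(1) show ?thesis
    by blast
qed

lemma topspace_cantor_space [simp]: "topspace cantor_space = UNIV"
  by (simp add: cantor_space_def)

lemma cantor_space_open_contains_cylinder:
  assumes "openin cantor_space U" "c \<in> U"
  obtains k where "\<And>d. (\<And>i. i < k \<Longrightarrow> d i = c i) \<Longrightarrow> d \<in> U"
proof -
  obtain V where V: "finite {i. V i \<noteq> UNIV}" "c \<in> Pi\<^sub>E UNIV V" "Pi\<^sub>E UNIV V \<subseteq> U"
    using assms unfolding cantor_space_def openin_product_topology_alt by fastforce
  obtain k where k: "{i. V i \<noteq> UNIV} \<subseteq> {..<k}"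
    using finite_nat_bounded[OF V(1)] by blast
  have "d \<in> U" if "\<And>i. i < k \<Longrightarrow> d i = c i" for d
  proof -
    have "d i \<in> V i" for i
      using that[of i] V(2) k by (cases "i < k") auto
    then show ?thesis
      using V(3) by auto
  qed
  then show thesis
    using that by blast
qed

lemma openin_cantor_space_cylinder:
  "openin cantor_space {d. \<forall>i<length bs. d i = bs ! i}"
  unfolding cantor_space_def openin_product_topology_alt
proof (intro ballI exI conjI)
  let ?V = "\<lambda>i. if i < length bs then {bs ! i} else UNIV"
  show "finite {i \<in> UNIV. ?V i \<noteq> topspace (discrete_topology UNIV)}"
    by (rule finite_subset[of _ "{..<length bs}"]) auto
  fix d assume "d \<in> {d. \<forall>i<length bs. d i = bs ! i}"
  then show "d \<in> Pi\<^sub>E UNIV ?V"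
    by auto
  have "d i = bs ! i" if "d \<in> Pi\<^sub>E UNIV ?V" "i < length bs" for d i
    using PiE_mem[OF that(1), of i] that(2) by simp
  then show "Pi\<^sub>E UNIV ?V \<subseteq> {d. \<forall>i<length bs. d i = bs ! i}"
    by blast
qed auto

lemma second_countable_cantor_space: "second_countable cantor_space"
  unfolding second_countable_def
proof (intro exI conjI allI impI)
  let ?cyl = "\<lambda>bs. {d :: nat \<Rightarrow> bool. \<forall>i<length bs. d i = bs ! i}"
  show "countable (range ?cyl)"
    by (rule countable_image) simp
  show "\<forall>V\<in>range ?cyl. openin cantor_space V"
    using openin_cantor_space_cylinder by blast
  fix U c assume "openin cantor_space U \<and> c \<in> U"
  then obtain k where k: "\<And>d. (\<And>i. i < k \<Longrightarrow> d i = c i) \<Longrightarrow> d \<in> U"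
    using cantor_space_open_contains_cylinder by metis
  show "\<exists>V\<in>range ?cyl. c \<in> V \<and> V \<subseteq> U"
  proof
    have "?cyl (map c [0..<k]) \<subseteq> U"
    proof
      fix d assume "d \<in> ?cyl (map c [0..<k])"
      then show "d \<in> U"
        by (intro k) simp
    qed
    then show "c \<in> ?cyl (map c [0..<k]) \<and> ?cyl (map c [0..<k]) \<subseteq> U"
      by simp
  qed (rule rangeI)
qed

lemma cantor_space_not_open_singleton: "\<not> openin cantor_space {c}"
proof
  assume "openin cantor_space {c}"
  then obtain k where "\<And>d. (\<And>i. i < k \<Longrightarrow> d i = c i) \<Longrightarrow> d \<in> {c}"
    using cantor_space_open_contains_cylinder by blast
  from this[of "c(k := \<not> c k)"] show False
    by (auto dest: fun_cong[of _ _ k])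
qed

lemma uncountable_UNIV_nat_bool: "uncountable (UNIV :: (nat \<Rightarrow> bool) set)"
proof
  assume "countable (UNIV :: (nat \<Rightarrow> bool) set)"
  then have "range (from_nat_into (UNIV :: (nat \<Rightarrow> bool) set)) = UNIV"
    by simp
  then obtain k where "from_nat_into UNIV k = (\<lambda>i. \<not> from_nat_into UNIV i i)"
    by (metis UNIV_I imageE)
  from fun_cong[OF this, of k] show False
    by simp
qed

lemma continuous_map_alexandroff_nplicate_level0:
  assumes "0 < n"
  shows "continuous_map X (alexandroff_nplicate X n) (\<lambda>x. (x, 0))"
  unfolding alexandroff_nplicate_def
proof (rule continuous_on_generated_topo)
  fix W
  assume "W \<in> {{(x, i)} |x i. x \<in> topspace X \<and> 1 \<le> i \<and> i < n}
             \<union> {U \<times> {0..<n} - {(x, i) |i. 1 \<le> i \<and> i < n} |U x. openin X U \<and> x \<in> U}"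
  then consider x i where "W = {(x, i)}" "1 \<le> i"
    | U x where "W = U \<times> {0..<n} - {(x, i) |i. 1 \<le> i \<and> i < n}" "openin X U"
    by (elim UnE CollectE exE conjE) auto
  then show "openin X ((\<lambda>x. (x, 0)) -` W \<inter> topspace X)"
  proof cases
    case 1
    then have "(\<lambda>x. (x, 0)) -` W \<inter> topspace X = {}"
      by auto
    then show ?thesis
      by simp
  next
    case 2
    then have "(\<lambda>x. (x, 0)) -` W \<inter> topspace X = U"
      using assms openin_subset[OF 2(2)] by auto
    with 2 show ?thesis
      by simp
  qed
next
  show "(\<lambda>x. (x, 0)) ` topspace X \<subseteq> \<Union> ({{(x, i)} |x i. x \<in> topspace X \<and> 1 \<le> i \<and> i < n}
      \<union> {U \<times> {0..<n} - {(x, i) |i. 1 \<le> i \<and> i < n} |U x. openin X U \<and> x \<in> U})"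
  proof
    fix q :: "'a \<times> nat"
    assume "q \<in> (\<lambda>x. (x, 0)) ` topspace X"
    then obtain x where x: "x \<in> topspace X" "q = (x, 0)"
      by blast
    have "q \<in> topspace X \<times> {0..<n} - {(x, i) |i. 1 \<le> i \<and> i < n}"
      using x assms by auto
    moreover have "topspace X \<times> {0..<n} - {(x, i) |i. 1 \<le> i \<and> i < n}
        \<in> {U \<times> {0..<n} - {(x, i) |i. 1 \<le> i \<and> i < n} |U x. openin X U \<and> x \<in> U}"
      using x by blast
    ultimately show "q \<in> \<Union> ({{(x, i)} |x i. x \<in> topspace X \<and> 1 \<le> i \<and> i < n}
      \<union> {U \<times> {0..<n} - {(x, i) |i. 1 \<le> i \<and> i < n} |U x. openin X U \<and> x \<in> U})"
      by blast
  qed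
qed

lemma alexandroff_nplicate_nonisolated_imp_level0:
  assumes "p \<in> topspace (alexandroff_nplicate X n)" "\<not> openin (alexandroff_nplicate X n) {p}"
  shows "snd p = 0"
proof (rule ccontr)
  obtain x i where p: "p = (x, i)"
    by fastforce
  have "x \<in> topspace X \<and> i < n"
    using assms(1) unfolding p alexandroff_nplicate_def by (auto dest: openin_subset)
  moreover assume "snd p \<noteq> 0"
  ultimately have "openin (alexandroff_nplicate X n) {p}"
    unfolding p alexandroff_nplicate_def by (intro topology_generated_by_Basis) auto
  with assms(2) show False
    by contradiction
qed

text \<open>The largest basic neighbourhood of p in S_n(I): leftwards at level 0, rightwards at level 1;
  its value at other levels is irrelevant.\<close>
definition split_nbhd :: "nat \<Rightarrow> real \<times> nat \<Rightarrow> (real \<times> nat) set" where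
  "split_nbhd n p = insert p
     (if snd p = 0 then {(y, i). 0 < y \<and> y < fst p \<and> i < n}
      else {(y, i). fst p < y \<and> y < 1 \<and> i < n})"

lemma split_nbhd_antisym:
  assumes "snd p = snd q" "p \<in> split_nbhd n q" "q \<in> split_nbhd n p"
  shows "p = q"
  using assms by (cases p, cases q) (auto simp: split_nbhd_def split: if_splits)

lemma topspace_split_interval_subset:
  assumes "2 \<le> n"
  shows "topspace (split_interval n) \<subseteq> {0..1} \<times> {..<n}"
  using assms unfolding split_interval_def topology_generated_by_topspace by auto

lemma openin_split_nbhd_level0:
  assumes "0 < x" "x \<le> 1"
  shows "openin (split_interval n) (split_nbhd n (x, 0))"
  unfolding split_interval_def split_nbhd_def using assms
  by (intro topology_generated_by_Basis) (auto simp: case_prod_beta)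

lemma openin_split_nbhd_level1:
  assumes "0 \<le> x" "x < 1"
  shows "openin (split_interval n) (split_nbhd n (x, 1))"
  unfolding split_interval_def split_nbhd_def using assms
  by (intro topology_generated_by_Basis) (auto simp: case_prod_beta)

lemma openin_split_nbhd:
  assumes "2 \<le> n" "p \<in> topspace (split_interval n)" "\<not> openin (split_interval n) {p}"
  shows "openin (split_interval n) (split_nbhd n p)"
proof -
  obtain x i where p: "p = (x, i)"
    by fastforce
  have x: "0 \<le> x" "x \<le> 1" and "i < n"
    using topspace_split_interval_subset[OF assms(1)] assms(2) p by auto
  have "openin (split_interval n) {(x, i)}" if "2 \<le> i \<or> (x, i) = (0, 0) \<or> (x, i) = (1, 1)"
    unfolding split_interval_def using that x \<open>i < n\<close> by (intro topology_generated_by_Basis) auto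
  then have "i = 0 \<and> 0 < x \<or> i = 1 \<and> x < 1"
    using assms(3) p x by fastforce
  then show ?thesis
    unfolding p using x openin_split_nbhd_level0 openin_split_nbhd_level1 by auto
qed

definition approached_from_left :: "(real \<times> nat) set \<Rightarrow> bool" where
  "approached_from_left W \<longleftrightarrow>
     (\<forall>x>0. (x, 0) \<in> W \<longrightarrow> (\<exists>z<x. \<forall>y. z < y \<and> y < x \<longrightarrow> (y, 0) \<in> W))"

lemma istopology_approached_from_left: "istopology approached_from_left"
  unfolding istopology_def
proof (intro conjI allI impI)
  fix S T assume "approached_from_left S" "approached_from_left T"
  show "approached_from_left (S \<inter> T)"
    unfolding approached_from_left_def
  proof (intro allI impI)
    fix x :: real assume "0 < x" "(x, 0) \<in> S \<inter> T"
    then obtain z1 z2 where z: "z1 < x" "\<forall>y. z1 < y \<and> y < x \<longrightarrow> (y, 0) \<in> S"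
      "z2 < x" "\<forall>y. z2 < y \<and> y < x \<longrightarrow> (y, 0) \<in> T"
      using \<open>approached_from_left S\<close> \<open>approached_from_left T\<close>
      unfolding approached_from_left_def by blast
    have "\<forall>y. max z1 z2 < y \<and> y < x \<longrightarrow> (y, 0) \<in> S \<inter> T"
      using z(2,4) by simp
    moreover have "max z1 z2 < x"
      using z(1,3) by simp
    ultimately show "\<exists>z<x. \<forall>y. z < y \<and> y < x \<longrightarrow> (y, 0) \<in> S \<inter> T"
      by blast
  qed
next
  fix \<K> assume \<K>: "\<forall>K\<in>\<K>. approached_from_left K"
  show "approached_from_left (\<Union>\<K>)"
    unfolding approached_from_left_def
  proof (intro allI impI)
    fix x :: real assume "0 < x" "(x, 0) \<in> \<Union>\<K>"
    then obtain K where "K \<in> \<K>" "(x, 0) \<in> K"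
      by blast
    with \<K> \<open>0 < x\<close> obtain z where "z < x" "\<forall>y. z < y \<and> y < x \<longrightarrow> (y, 0) \<in> K"
      unfolding approached_from_left_def by blast
    with \<open>K \<in> \<K>\<close> show "\<exists>z<x. \<forall>y. z < y \<and> y < x \<longrightarrow> (y, 0) \<in> \<Union>\<K>"
      by blast
  qed
qed

lemma openin_split_interval_imp_approached_from_left:
  assumes "0 < n" "openin (split_interval n) W"
  shows "approached_from_left W"
proof -
  have "approached_from_left s"
    if "s \<in> {{(x, i)} | x i. 0 \<le> x \<and> x \<le> 1 \<and> 2 \<le> i \<and> i < n}
      \<union> {{(0, 0)}, {(1, 1)}}
      \<union> {insert (x, 0) {(y, i). z < y \<and> y < x \<and> i < n} | x z.
            0 < x \<and> x \<le> 1 \<and> 0 \<le> z \<and> z < x}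
      \<union> {insert (x, 1) {(y, i). x < y \<and> y < z \<and> i < n} | x z.
            0 \<le> x \<and> x < 1 \<and> x < z \<and> z \<le> 1}" for s
  proof -
    from that consider "\<forall>x>0. (x, 0) \<notin> s"
      | x z where "s = insert (x, 0) {(y, i). z < y \<and> y < x \<and> i < n}" "z < x"
      | x z where "s = insert (x, 1) {(y, i). x < y \<and> y < z \<and> i < n}"
      by (elim UnE insertE CollectE exE conjE) auto
    then show ?thesis
    proof cases
      case (2 x' z)
      show ?thesis
        unfolding approached_from_left_def 2(1) using 2(2) \<open>0 < n\<close>
        by (intro allI impI exI[of _ z]) auto
    next
      case (3 x' z)
      show ?thesis
        unfolding approached_from_left_def 3 using \<open>0 < n\<close>
        by (intro allI impI exI[of _ x']) auto
    qed (simp add: approached_from_left_def)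
  qed
  with istopology_approached_from_left show ?thesis
    using assms(2) unfolding split_interval_def openin_topology_generated_by_iff
    by (rule generate_topology_on_coarsest)
qed

lemma split_interval_not_open_singleton_level0:
  assumes "0 < n" "0 < x"
  shows "\<not> openin (split_interval n) {(x, 0)}"
proof
  assume "openin (split_interval n) {(x, 0)}"
  then obtain z where "z < x" "\<forall>y. z < y \<and> y < x \<longrightarrow> (y, 0) \<in> {(x, 0 :: nat)}"
    using openin_split_interval_imp_approached_from_left assms
    unfolding approached_from_left_def by blast
  moreover have "z < (z + x) / 2" "(z + x) / 2 < x"
    using \<open>z < x\<close> by auto
  ultimately have "((z + x) / 2, 0) \<in> {(x, 0 :: nat)}"
    by blast
  with \<open>z < x\<close> show False
    by simp
qed

lemma alexandroff_nplicate_embedding_nonisolated_level0: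
  assumes "0 < n" and g: "homeomorphic_map (alexandroff_nplicate X n) (subtopology Y A) g"
    and "c \<in> topspace X" "\<not> openin X {c}"
  shows "\<not> openin Y {g (c, 0)}"
proof
  have level0: "continuous_map X (alexandroff_nplicate X n) (\<lambda>c. (c, 0))"
    using assms(1) by (rule continuous_map_alexandroff_nplicate_level0)
  then have "(c, 0) \<in> topspace (alexandroff_nplicate X n)"
    using continuous_map_image_subset_topspace assms(3) by blast
  moreover assume "openin Y {g (c, 0)}"
  ultimately have "openin (alexandroff_nplicate X n) {(c, 0)}"
    by (rule homeomorphic_map_subtopology_reflects_isolated[OF g])
  then have "openin X {d \<in> topspace X. (d, 0) \<in> {(c, 0 :: nat)}}"
    by (rule openin_continuous_map_preimage[OF level0])
  with assms(3,4) show False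
    by (simp add: Collect_conv_if)
qed

lemma split_interval_embedding_level0:
  assumes "0 < n" and g: "homeomorphic_map (split_interval n) (subtopology (alexandroff_nplicate X n) B) g"
    and "0 < x" "(x, 0) \<in> topspace (split_interval n)"
  shows "snd (g (x, 0)) = 0"
proof (rule alexandroff_nplicate_nonisolated_imp_level0)
  show "g (x, 0) \<in> topspace (alexandroff_nplicate X n)"
    using continuous_map_image_subset_topspace[OF continuous_map_into_fulltopology[OF
        homeomorphic_imp_continuous_map[OF g]]] assms(4) by blast
  show "\<not> openin (alexandroff_nplicate X n) {g (x, 0)}"
    using homeomorphic_map_subtopology_reflects_isolated[OF g assms(4)]
      split_interval_not_open_singleton_level0[OF assms(1,3)] by blast
qed

lemma alexandroff_nplicate_cantor_space_not_embeddable_in_split_interval: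
  assumes "2 \<le> n"
    and g: "homeomorphic_map (alexandroff_nplicate cantor_space n) (subtopology (split_interval n) A) g"
  shows False
proof -
  let ?D = "alexandroff_nplicate cantor_space n" and ?S = "split_interval n"
  define h where "h c = g (c, 0)" for c
  have level0: "continuous_map cantor_space ?D (\<lambda>c. (c, 0))"
    using assms(1) by (intro continuous_map_alexandroff_nplicate_level0) simp
  have D0: "(c, 0) \<in> topspace ?D" for c
    using continuous_map_image_subset_topspace[OF level0] by auto
  have h_cont: "continuous_map cantor_space ?S h"
    unfolding h_def using continuous_map_compose[OF level0
        continuous_map_into_fulltopology[OF homeomorphic_imp_continuous_map[OF g]]]
    by (simp add: o_def)
  have h_in: "h c \<in> topspace ?S" for c
    using continuous_map_image_subset_topspace[OF h_cont] by auto
  have "inj h"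
    using inj_onD[OF homeomorphic_imp_injective_map[OF g]] D0 unfolding h_def by (auto intro: injI)
  have h_nonisolated: "\<not> openin ?S {h c}" for c
    unfolding h_def using assms(1) cantor_space_not_open_singleton
    by (intro alexandroff_nplicate_embedding_nonisolated_level0[OF _ g]) auto
  define U where "U c = {d \<in> topspace cantor_space. h d \<in> split_nbhd n (h c)}" for c
  have U: "openin cantor_space (U c) \<and> c \<in> U c" for c
  proof
    show "openin cantor_space (U c)"
      unfolding U_def
      by (intro openin_continuous_map_preimage[OF h_cont] openin_split_nbhd[OF assms(1) h_in h_nonisolated])
  qed (simp add: U_def split_nbhd_def)
  \<comment> \<open>\<open>split_nbhd_antisym\<close> needs points of equal level, hence the partition by level.\<close>
  have "countable {c. snd (h c) = l}" for l
  proof (rule countable_if_antisymmetric_neighbourhoods[OF second_countable_cantor_space])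
    show "openin cantor_space (U c) \<and> id c \<in> U c" for c
      using U by simp
    show "c = d" if "c \<in> {c. snd (h c) = l}" "d \<in> {c. snd (h c) = l}" "id c \<in> U d" "id d \<in> U c"
      for c d
      using that split_nbhd_antisym[of "h c" "h d"] \<open>inj h\<close> unfolding U_def by (auto dest: injD)
  qed
  then have "countable (\<Union>l. {c. snd (h c) = l})"
    by (intro countable_UN) auto
  moreover have "(\<Union>l. {c. snd (h c) = l}) = UNIV"
    by auto
  ultimately show False
    using uncountable_UNIV_nat_bool by simp
qed

lemma split_interval_not_embeddable_in_alexandroff_nplicate_cantor_space:
  assumes "2 \<le> n"
    and g: "homeomorphic_map (split_interval n) (subtopology (alexandroff_nplicate cantor_space n) B) g"
  shows False
proof -
  let ?D = "alexandroff_nplicate cantor_space n" and ?S = "split_interval n"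
  define I where "I = {0<..<(1::real)}"
  have nbhd_open: "openin ?S (split_nbhd n (x, 0))" if "x \<in> I" for x
    using that openin_split_nbhd_level0 unfolding I_def by simp
  have S0: "(x, 0) \<in> topspace ?S" if "x \<in> I" for x
    using openin_subset[OF nbhd_open[OF that]] unfolding split_nbhd_def by blast
  have level0: "continuous_map cantor_space ?D (\<lambda>c. (c, 0))"
    using assms(1) by (intro continuous_map_alexandroff_nplicate_level0) simp
  have g_level0: "snd (g (x, 0)) = 0" if "x \<in> I" for x
    using assms(1) that S0[OF that] unfolding I_def by (intro split_interval_embedding_level0[OF _ g]) auto
  have "\<forall>x\<in>I. \<exists>W. openin ?D W \<and> (\<forall>p\<in>topspace ?S. g p \<in> W \<longleftrightarrow> p \<in> split_nbhd n (x, 0))"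
    using homeomorphic_map_subtopology_open_trace[OF g nbhd_open] by blast
  then obtain W where W: "\<And>x. x \<in> I \<Longrightarrow>
      openin ?D (W x) \<and> (\<forall>p\<in>topspace ?S. g p \<in> W x \<longleftrightarrow> p \<in> split_nbhd n (x, 0))"
    by metis
  define U where "U x = {c \<in> topspace cantor_space. (c, 0) \<in> W x}" for x
  define h where "h x = fst (g (x, 0))" for x
  have hg: "g (x, 0) = (h x, 0)" if "x \<in> I" for x
    using g_level0[OF that] unfolding h_def by (metis prod.collapse)
  have U_mem: "h x' \<in> U x \<longleftrightarrow> (x', 0) \<in> split_nbhd n (x, 0)" if "x \<in> I" "x' \<in> I" for x x'
  proof -
    have "h x' \<in> U x \<longleftrightarrow> g (x', 0) \<in> W x"
      using hg[OF that(2)] by (simp add: U_def)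
    also have "\<dots> \<longleftrightarrow> (x', 0) \<in> split_nbhd n (x, 0)"
      using W[OF that(1)] S0[OF that(2)] by blast
    finally show ?thesis .
  qed
  have "countable I"
  proof (rule countable_if_antisymmetric_neighbourhoods[OF second_countable_cantor_space])
    fix x assume x: "x \<in> I"
    have "openin cantor_space {c \<in> topspace cantor_space. (c, 0) \<in> W x}"
      by (rule openin_continuous_map_preimage[OF level0 conjunct1[OF W[OF x]]])
    then show "openin cantor_space (U x) \<and> h x \<in> U x"
      using U_mem[OF x x] by (simp add: U_def split_nbhd_def)
  next
    fix x x' assume "x \<in> I" "x' \<in> I" "h x \<in> U x'" "h x' \<in> U x"
    then have "(x, 0 :: nat) = (x', 0)"
      by (intro split_nbhd_antisym[of _ _ n]) (simp_all add: U_mem)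
    then show "x = x'"
      by simp
  qed
  then show False
    unfolding I_def using uncountable_open_interval[of 0 1] by simp
qed

theorem mainTheorem10:
  fixes n :: nat
  assumes "2 \<le> n"
  shows "\<not> (\<exists>A. A \<subseteq> topspace (split_interval n) \<and>
              subtopology (split_interval n) A homeomorphic_space alexandroff_nplicate cantor_space n)
       \<and> \<not> (\<exists>B. B \<subseteq> topspace (alexandroff_nplicate cantor_space n) \<and>
              subtopology (alexandroff_nplicate cantor_space n) B homeomorphic_space split_interval n)"
  using alexandroff_nplicate_cantor_space_not_embeddable_in_split_interval[OF assms]
    split_interval_not_embeddable_in_alexandroff_nplicate_cantor_space[OF assms]
  by (metis homeomorphic_space homeomorphic_space_sym)

end
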